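(* Let $G=\mathbb{Z}_2\times\mathbb{Z}_2\times\mathbb{Z}_2$ and let $M$ be a finite-dimensional graded pointed Majid algebra over $\mathbbm{k}$ with group of group-likes $G$, generated by $G$ and quasi-commutative skew-primitive elements $X_1,\dots,X_N$ (i.e. $X_iX_j=q_{j,i}X_jX_i$ for $i\ne j$) with $\Delta(X_i)=X_i\otimes1+x_i\otimes X_i$, where $x_1,x_2,x_3$ generate $G$ (so $G=\langle x_1\rangle\times\langle x_2\rangle\times\langle x_3\rangle$). Suppose the associator of $M$ restricted to $G$ has the form $$\Phi(x_1^{i_1}x_2^{i_2}x_3^{i_3},x_1^{j_1}x_2^{j_2}x_3^{j_3},x_1^{k_1}x_2^{k_2}x_3^{k_3})=\prod_{l=1}^3(-1)^{a_li_l[\frac{j_l+k_l}{2}]}\prod_{1\le s<t\le3}(-1)^{a_{st}i_t[\frac{j_s+k_s}{2}]}$$ ($i_l,j_l,k_l\in\{0,1\}$) with $a_l,a_{st}\in\{0,1\}$. Then $a_{12}=a_{13}=a_{23}=0$, i.e. $\Phi(x_1^{i_1}x_2^{i_2}x_3^{i_3},x_1^{j_1}x_2^{j_2}x_3^{j_3},x_1^{k_1}x_2^{k_2}x_3^{k_3})=\prod_{l=1}^3(-1)^{a_li_l[\frac{j_l+k_l}{2}]}$.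
   Context: $\mathbbm{k}$ algebraically closed of characteristic $0$; $[x]$ the integer part. A Majid algebra (coquasi-Hopf algebra) is a coalgebra with a unital non-associative multiplication that is a coalgebra map, an associator $\Phi$ (convolution-invertible normalized 3-cocycle) with $a_1(b_1c_1)\Phi(a_2,b_2,c_2)=\Phi(a_1,b_1,c_1)(a_2b_2)c_2$, and a quasi-antipode $(S,\alpha,\beta)$ satisfying the coquasi-Hopf axioms. Pointed: coradical $\mathbbm{k}G$, $G$ the group-likes; the associator restricts to a normalized 3-cocycle on $G$. Graded: coradically graded $M=\bigoplus M(n)$, $M(0)=\mathbbm{k}G$, respected by the structure maps, with $\Phi,\alpha,\beta$ vanishing when an argument has positive degree. Skew-primitive elements are elements $X$ with $\Delta(X)=X\otimes h+g\otimes X$, $g,h\in G$; "generated by" means generated as an algebra. *)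

theory Defs
  imports "HOL-Computational_Algebra.Polynomial"
begin

text \<open>A finite-dimensional space M is
  represented as 'b => 'k for a finite basis type 'b (chosen homogeneous for the
  grading); tensor powers as functions on tuples of basis indices.  Multilinear
  structure maps are given by structure constants on basis elements.\<close>

definition alg_closed_field :: "'k::field itself \<Rightarrow> bool" where
  "alg_closed_field _ \<longleftrightarrow> (\<forall>p::'k poly. 0 < degree p \<longrightarrow> (\<exists>z. poly p z = 0))"

definition bvec :: "'b \<Rightarrow> 'b \<Rightarrow> 'k::field" where
  "bvec b = (\<lambda>i. if i = b then 1 else 0)"

definition lspan :: "('i \<Rightarrow> 'k::field) set \<Rightarrow> ('i \<Rightarrow> 'k) set" where
  "lspan S = {v. \<exists>F c. finite F \<and> F \<subseteq> S \<and> v = (\<lambda>x. \<Sum>u\<in>F. c u * u x)}"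

definition lsubspace :: "('i \<Rightarrow> 'k::field) set \<Rightarrow> bool" where
  "lsubspace S \<longleftrightarrow> lspan S = S"

definition tens :: "('b \<Rightarrow> 'k::field) \<Rightarrow> ('b \<Rightarrow> 'k) \<Rightarrow> ('b \<times> 'b \<Rightarrow> 'k)" where
  "tens u v = (\<lambda>(i, j). u i * v j)"

definition tspan :: "('b \<Rightarrow> 'k::field) set \<Rightarrow> ('b \<Rightarrow> 'k) set \<Rightarrow> ('b \<times> 'b \<Rightarrow> 'k) set" where
  "tspan U W = lspan {tens u w | u w. u \<in> U \<and> w \<in> W}"

definition mulv :: "('b \<Rightarrow> 'b \<Rightarrow> 'b \<Rightarrow> 'k::field) \<Rightarrow> ('b::finite \<Rightarrow> 'k) \<Rightarrow> ('b \<Rightarrow> 'k) \<Rightarrow> ('b \<Rightarrow> 'k)" where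
  "mulv mu u v = (\<lambda>t. \<Sum>i\<in>UNIV. \<Sum>j\<in>UNIV. u i * v j * mu i j t)"

definition comul :: "('b \<Rightarrow> 'b \<Rightarrow> 'b \<Rightarrow> 'k::field) \<Rightarrow> ('b::finite \<Rightarrow> 'k) \<Rightarrow> ('b \<times> 'b \<Rightarrow> 'k)" where
  "comul co u = (\<lambda>(j, k). \<Sum>i\<in>UNIV. u i * co i j k)"

definition counit :: "('b \<Rightarrow> 'k::field) \<Rightarrow> ('b::finite \<Rightarrow> 'k) \<Rightarrow> 'k" where
  "counit eps u = (\<Sum>i\<in>UNIV. u i * eps i)"

definition trif :: "('b \<Rightarrow> 'b \<Rightarrow> 'b \<Rightarrow> 'k::field) \<Rightarrow> ('b::finite \<Rightarrow> 'k) \<Rightarrow> ('b \<Rightarrow> 'k) \<Rightarrow> ('b \<Rightarrow> 'k) \<Rightarrow> 'k" where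
  "trif phi u v w = (\<Sum>p\<in>UNIV. \<Sum>q\<in>UNIV. \<Sum>r\<in>UNIV. u p * v q * w r * phi p q r)"

text \<open>S(e_a) = sum_j s a j e_j\<close>
definition svec :: "('b \<Rightarrow> 'b \<Rightarrow> 'k::field) \<Rightarrow> 'b \<Rightarrow> ('b \<Rightarrow> 'k)" where
  "svec s a = (\<lambda>j. s a j)"

definition co3 :: "('b \<Rightarrow> 'b \<Rightarrow> 'b \<Rightarrow> 'k::field) \<Rightarrow> 'b::finite \<Rightarrow> 'b \<Rightarrow> 'b \<Rightarrow> 'b \<Rightarrow> 'k" where
  "co3 co a i j k = (\<Sum>l\<in>UNIV. co a i l * co l j k)"

definition co5 :: "('b \<Rightarrow> 'b \<Rightarrow> 'b \<Rightarrow> 'k::field) \<Rightarrow> 'b::finite \<Rightarrow> 'b \<Rightarrow> 'b \<Rightarrow> 'b \<Rightarrow> 'b \<Rightarrow> 'b \<Rightarrow> 'k" where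
  "co5 co a i1 i2 i3 i4 i5 = (\<Sum>l\<in>UNIV. co3 co a i1 i2 l * co3 co l i3 i4 i5)"

definition sw3 :: "('b \<Rightarrow> 'b \<Rightarrow> 'b \<Rightarrow> 'k::field) \<Rightarrow> 'b::finite \<Rightarrow> 'b \<Rightarrow> 'b \<Rightarrow>
    ('b \<Rightarrow> 'b \<Rightarrow> 'b \<Rightarrow> 'b \<Rightarrow> 'b \<Rightarrow> 'b \<Rightarrow> 'k) \<Rightarrow> 'k" where
  "sw3 co a b c F = (\<Sum>a1\<in>UNIV. \<Sum>a2\<in>UNIV. \<Sum>b1\<in>UNIV. \<Sum>b2\<in>UNIV. \<Sum>c1\<in>UNIV. \<Sum>c2\<in>UNIV.
      co a a1 a2 * co b b1 b2 * co c c1 c2 * F a1 b1 c1 a2 b2 c2)"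

definition majid_algebra ::
  "('b::finite \<Rightarrow> 'b \<Rightarrow> 'b \<Rightarrow> 'k::field) \<Rightarrow> ('b \<Rightarrow> 'k) \<Rightarrow> ('b \<Rightarrow> 'b \<Rightarrow> 'b \<Rightarrow> 'k) \<Rightarrow> ('b \<Rightarrow> 'k)
   \<Rightarrow> ('b \<Rightarrow> 'b \<Rightarrow> 'b \<Rightarrow> 'k) \<Rightarrow> ('b \<Rightarrow> 'b \<Rightarrow> 'k) \<Rightarrow> ('b \<Rightarrow> 'k) \<Rightarrow> ('b \<Rightarrow> 'k) \<Rightarrow> bool" where
  "majid_algebra mu one co eps phi s alpha beta \<longleftrightarrow>
     \<comment> \<open>coalgebra: coassociativity and counit\<close>
     (\<forall>a i j k. (\<Sum>l\<in>UNIV. co a l k * co l i j) = (\<Sum>l\<in>UNIV. co a i l * co l j k)) \<and>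
     (\<forall>a j. (\<Sum>i\<in>UNIV. co a i j * eps i) = bvec a j \<and> (\<Sum>i\<in>UNIV. co a j i * eps i) = bvec a j) \<and>
     \<comment> \<open>unit\<close>
     (\<forall>a. mulv mu one (bvec a) = bvec a \<and> mulv mu (bvec a) one = bvec a) \<and>
     \<comment> \<open>multiplication and unit are coalgebra maps\<close>
     (\<forall>a b j k. (\<Sum>l\<in>UNIV. mu a b l * co l j k) =
        (\<Sum>a1\<in>UNIV. \<Sum>a2\<in>UNIV. \<Sum>b1\<in>UNIV. \<Sum>b2\<in>UNIV. co a a1 a2 * co b b1 b2 * mu a1 b1 j * mu a2 b2 k)) \<and>
     (\<forall>a b. (\<Sum>l\<in>UNIV. mu a b l * eps l) = eps a * eps b) \<and>
     comul co one = tens one one \<and> counit eps one = 1 \<and>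
     \<comment> \<open>quasi-associativity: a1(b1c1) Phi(a2,b2,c2) = Phi(a1,b1,c1) (a2b2)c2\<close>
     (\<forall>a b c t. sw3 co a b c (\<lambda>a1 b1 c1 a2 b2 c2. mulv mu (bvec a1) (mulv mu (bvec b1) (bvec c1)) t * phi a2 b2 c2)
              = sw3 co a b c (\<lambda>a1 b1 c1 a2 b2 c2. phi a1 b1 c1 * mulv mu (mulv mu (bvec a2) (bvec b2)) (bvec c2) t)) \<and>
     \<comment> \<open>3-cocycle: Phi(b1,c1,d1)Phi(a1,b2c2,d2)Phi(a2,b3,c3) = Phi(a1,b1,c1d1)Phi(a2b2,c2,d2)\<close>
     (\<forall>a b c d.
        (\<Sum>a1\<in>UNIV. \<Sum>a2\<in>UNIV. \<Sum>b1\<in>UNIV. \<Sum>b2\<in>UNIV. \<Sum>b3\<in>UNIV. \<Sum>c1\<in>UNIV. \<Sum>c2\<in>UNIV. \<Sum>c3\<in>UNIV.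
         \<Sum>d1\<in>UNIV. \<Sum>d2\<in>UNIV.
           co a a1 a2 * co3 co b b1 b2 b3 * co3 co c c1 c2 c3 * co d d1 d2 *
           (phi b1 c1 d1 * trif phi (bvec a1) (mulv mu (bvec b2) (bvec c2)) (bvec d2) * phi a2 b3 c3))
      = (\<Sum>a1\<in>UNIV. \<Sum>a2\<in>UNIV. \<Sum>b1\<in>UNIV. \<Sum>b2\<in>UNIV. \<Sum>c1\<in>UNIV. \<Sum>c2\<in>UNIV.
         \<Sum>d1\<in>UNIV. \<Sum>d2\<in>UNIV.
           co a a1 a2 * co b b1 b2 * co c c1 c2 * co d d1 d2 *
           (trif phi (bvec a1) (bvec b1) (mulv mu (bvec c1) (bvec d1)) *
            trif phi (mulv mu (bvec a2) (bvec b2)) (bvec c2) (bvec d2)))) \<and>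
     \<comment> \<open>normalized\<close>
     (\<forall>a b. trif phi (bvec a) one (bvec b) = eps a * eps b) \<and>
     \<comment> \<open>S is a coalgebra antimorphism\<close>
     (\<forall>a j k. (\<Sum>l\<in>UNIV. s a l * co l j k) = (\<Sum>a1\<in>UNIV. \<Sum>a2\<in>UNIV. co a a1 a2 * s a2 j * s a1 k)) \<and>
     (\<forall>a. (\<Sum>l\<in>UNIV. s a l * eps l) = eps a) \<and>
     \<comment> \<open>S(a1) alpha(a2) a3 = alpha(a) 1 ;  a1 beta(a2) S(a3) = beta(a) 1\<close>
     (\<forall>a t. (\<Sum>i\<in>UNIV. \<Sum>j\<in>UNIV. \<Sum>k\<in>UNIV. co3 co a i j k * alpha j * mulv mu (svec s i) (bvec k) t)
            = alpha a * one t) \<and>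
     (\<forall>a t. (\<Sum>i\<in>UNIV. \<Sum>j\<in>UNIV. \<Sum>k\<in>UNIV. co3 co a i j k * beta j * mulv mu (bvec i) (svec s k) t)
            = beta a * one t) \<and>
     (\<exists>psi.
        \<comment> \<open>psi is the convolution inverse of phi\<close>
        (\<forall>a b c. sw3 co a b c (\<lambda>a1 b1 c1 a2 b2 c2. phi a1 b1 c1 * psi a2 b2 c2) = eps a * eps b * eps c \<and>
                 sw3 co a b c (\<lambda>a1 b1 c1 a2 b2 c2. psi a1 b1 c1 * phi a2 b2 c2) = eps a * eps b * eps c) \<and>
        \<comment> \<open>Phi(a1,S(a3),a5) beta(a2) alpha(a4) = eps(a) ; Phi^-1(S(a1),a3,S(a5)) alpha(a2) beta(a4) = eps(a)\<close>
        (\<forall>a. (\<Sum>i1\<in>UNIV. \<Sum>i2\<in>UNIV. \<Sum>i3\<in>UNIV. \<Sum>i4\<in>UNIV. \<Sum>i5\<in>UNIV.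
               co5 co a i1 i2 i3 i4 i5 * trif phi (bvec i1) (svec s i3) (bvec i5) * beta i2 * alpha i4) = eps a) \<and>
        (\<forall>a. (\<Sum>i1\<in>UNIV. \<Sum>i2\<in>UNIV. \<Sum>i3\<in>UNIV. \<Sum>i4\<in>UNIV. \<Sum>i5\<in>UNIV.
               co5 co a i1 i2 i3 i4 i5 * trif psi (svec s i1) (bvec i3) (svec s i5) * alpha i2 * beta i4) = eps a))"

definition grouplikes :: "('b \<Rightarrow> 'b \<Rightarrow> 'b \<Rightarrow> 'k::field) \<Rightarrow> ('b::finite \<Rightarrow> 'k) set" where
  "grouplikes co = {g. g \<noteq> (\<lambda>_. 0) \<and> comul co g = tens g g}"

definition subcoalgebra :: "('b \<Rightarrow> 'b \<Rightarrow> 'b \<Rightarrow> 'k::field) \<Rightarrow> ('b::finite \<Rightarrow> 'k) set \<Rightarrow> bool" where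
  "subcoalgebra co D \<longleftrightarrow> lsubspace D \<and> (\<forall>v\<in>D. comul co v \<in> tspan D D)"

definition simple_subcoalgebra :: "('b \<Rightarrow> 'b \<Rightarrow> 'b \<Rightarrow> 'k::field) \<Rightarrow> ('b::finite \<Rightarrow> 'k) set \<Rightarrow> bool" where
  "simple_subcoalgebra co D \<longleftrightarrow> subcoalgebra co D \<and> D \<noteq> {\<lambda>_. 0} \<and>
     (\<forall>D'. subcoalgebra co D' \<and> D' \<subseteq> D \<longrightarrow> D' = {\<lambda>_. 0} \<or> D' = D)"

definition coradical :: "('b \<Rightarrow> 'b \<Rightarrow> 'b \<Rightarrow> 'k::field) \<Rightarrow> ('b::finite \<Rightarrow> 'k) set" where
  "coradical co = lspan (\<Union>{D. simple_subcoalgebra co D})"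

definition pointed :: "('b::finite \<Rightarrow> 'b \<Rightarrow> 'b \<Rightarrow> 'k::field) \<Rightarrow> bool" where
  "pointed co \<longleftrightarrow> coradical co = lspan (grouplikes co)"

fun corad_filt :: "('b \<Rightarrow> 'b \<Rightarrow> 'b \<Rightarrow> 'k::field) \<Rightarrow> nat \<Rightarrow> ('b::finite \<Rightarrow> 'k) set" where
  "corad_filt co 0 = coradical co"
| "corad_filt co (Suc n) =
     {v. comul co v \<in> lspan ({tens u w | u w. w \<in> corad_filt co n} \<union>
                               {tens u w | u w. u \<in> coradical co})}"

definition homog :: "('b \<Rightarrow> nat) \<Rightarrow> nat \<Rightarrow> ('b \<Rightarrow> 'k::field) set" where
  "homog deg n = lspan {bvec b | b. deg b = n}"

definition graded_majid ::
  "('b \<Rightarrow> nat) \<Rightarrow> ('b::finite \<Rightarrow> 'b \<Rightarrow> 'b \<Rightarrow> 'k::field) \<Rightarrow> ('b \<Rightarrow> 'k) \<Rightarrow> ('b \<Rightarrow> 'b \<Rightarrow> 'b \<Rightarrow> 'k) \<Rightarrow> ('b \<Rightarrow> 'k)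
   \<Rightarrow> ('b \<Rightarrow> 'b \<Rightarrow> 'b \<Rightarrow> 'k) \<Rightarrow> ('b \<Rightarrow> 'b \<Rightarrow> 'k) \<Rightarrow> ('b \<Rightarrow> 'k) \<Rightarrow> ('b \<Rightarrow> 'k) \<Rightarrow> bool" where
  "graded_majid deg mu one co eps phi s alpha beta \<longleftrightarrow>
     (\<forall>i j k. mu i j k \<noteq> 0 \<longrightarrow> deg k = deg i + deg j) \<and>
     (\<forall>i j k. co i j k \<noteq> 0 \<longrightarrow> deg i = deg j + deg k) \<and>
     (\<forall>b. one b \<noteq> 0 \<longrightarrow> deg b = 0) \<and>
     (\<forall>b. eps b \<noteq> 0 \<longrightarrow> deg b = 0) \<and>
     (\<forall>i j. s i j \<noteq> 0 \<longrightarrow> deg i = deg j) \<and>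
     (\<forall>p q r. phi p q r \<noteq> 0 \<longrightarrow> deg p = 0 \<and> deg q = 0 \<and> deg r = 0) \<and>
     (\<forall>b. alpha b \<noteq> 0 \<longrightarrow> deg b = 0) \<and>
     (\<forall>b. beta b \<noteq> 0 \<longrightarrow> deg b = 0) \<and>
     homog deg 0 = lspan (grouplikes co) \<and>
     \<comment> \<open>coradically graded: the coradical filtration is the filtration induced by the grading\<close>
     (\<forall>n. corad_filt co n = lspan {bvec b | b. deg b \<le> n})"

text \<open>algebra generated by a set (non-associative: closure under multiplication)\<close>
definition generates :: "('b::finite \<Rightarrow> 'b \<Rightarrow> 'b \<Rightarrow> 'k::field) \<Rightarrow> ('b \<Rightarrow> 'k) \<Rightarrow> ('b \<Rightarrow> 'k) set \<Rightarrow> bool" where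
  "generates mu one S \<longleftrightarrow>
     (\<forall>T. lsubspace T \<and> one \<in> T \<and> S \<subseteq> T \<and> (\<forall>u\<in>T. \<forall>v\<in>T. mulv mu u v \<in> T) \<longrightarrow> T = UNIV)"

definition pw :: "('b \<Rightarrow> 'k::field) \<Rightarrow> ('b \<Rightarrow> 'k) \<Rightarrow> nat \<Rightarrow> ('b \<Rightarrow> 'k)" where
  "pw one v n = (if n = 0 then one else v)"

text \<open>x1^i1 x2^i2 x3^i3 for i_l in {0,1}\<close>
definition mono :: "('b::finite \<Rightarrow> 'b \<Rightarrow> 'b \<Rightarrow> 'k::field) \<Rightarrow> ('b \<Rightarrow> 'k) \<Rightarrow> (nat \<Rightarrow> 'b \<Rightarrow> 'k) \<Rightarrow> nat \<times> nat \<times> nat \<Rightarrow> ('b \<Rightarrow> 'k)" where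
  "mono mu one x i = (case i of (i1, i2, i3) \<Rightarrow>
     mulv mu (mulv mu (pw one (x 1) i1) (pw one (x 2) i2)) (pw one (x 3) i3))"

definition cube :: "(nat \<times> nat \<times> nat) set" where
  "cube = {(i1, i2, i3). i1 \<le> 1 \<and> i2 \<le> 1 \<and> i3 \<le> 1}"

definition comp :: "nat \<Rightarrow> nat \<times> nat \<times> nat \<Rightarrow> nat" where
  "comp l i = (case i of (i1, i2, i3) \<Rightarrow> if l = 1 then i1 else if l = 2 then i2 else i3)"

definition phi_formula :: "(nat \<Rightarrow> nat) \<Rightarrow> (nat \<Rightarrow> nat \<Rightarrow> nat) \<Rightarrow> nat \<times> nat \<times> nat \<Rightarrow> nat \<times> nat \<times> nat \<Rightarrow> nat \<times> nat \<times> nat \<Rightarrow> 'k::field" where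
  "phi_formula a aa i j k =
     (\<Prod>l\<in>{1..3}. (-1) ^ (a l * comp l i * ((comp l j + comp l k) div 2))) *
     (\<Prod>(s, t)\<in>{(s, t). 1 \<le> s \<and> s < t \<and> t \<le> (3::nat)}. (-1) ^ (aa s t * comp t i * ((comp s j + comp s k) div 2)))"

definition phi_formula_diag :: "(nat \<Rightarrow> nat) \<Rightarrow> nat \<times> nat \<times> nat \<Rightarrow> nat \<times> nat \<times> nat \<Rightarrow> nat \<times> nat \<times> nat \<Rightarrow> 'k::field" where
  "phi_formula_diag a i j k = (\<Prod>l\<in>{1..3}. (-1) ^ (a l * comp l i * ((comp l j + comp l k) div 2)))"

end

theory Submission
  imports Defs
begin

text \<open>Let \<open>g, h\<close> be two of the generators \<open>x\<^sub>s, x\<^sub>t\<close> and \<open>X, Y\<close> the corresponding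
  skew-primitives. Because \<open>\<Phi>\<close> vanishes in positive degree, quasi-associativity applied to
  \<open>X\<close> and two group-likes \<open>k, l\<close> degenerates to \<open>X(kl) \<Phi>(1,k,l) = \<Phi>(g,k,l) (Xk)l\<close>, and
  likewise with \<open>X\<close> in the middle or last slot. Comparing the coproducts of \<open>XY = q YX\<close>
  and using that \<open>X, Y\<close> are linearly independent forces \<open>Xh = q hX\<close> and \<open>gY = q Yg\<close>.
  With \<open>k = l = h\<close> (resp. \<open>k = l = g\<close>) the three relations then give
  \<open>q\<^sup>2 \<Phi>(h,h,g) \<Phi>(g,h,h) = \<Phi>(h,g,h)\<close> and \<open>\<Phi>(h,g,g) \<Phi>(g,g,h) = q\<^sup>2 \<Phi>(g,h,g)\<close>.
  Eliminating \<open>q\<close> leaves an identity between values of \<open>\<Phi>\<close> on \<open>{g, h}\<close> which, for the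
  given formula and \<open>s < t\<close>, reads \<open>(-1)^a\<^sub>s\<^sub>t = 1\<close>.\<close>

lemma bvec_sym: "bvec a b = bvec b a"
  by (simp add: bvec_def)

lemma sum_bvec_right [simp]: "(\<Sum>i\<in>(UNIV::'b::finite set). f i * bvec j i) = (f j :: 'k::field)"
  by (simp add: bvec_def if_distrib cong: if_cong)

lemma sum_bvec_left [simp]: "(\<Sum>i\<in>(UNIV::'b::finite set). bvec j i * f i) = (f j :: 'k::field)"
  by (simp add: mult.commute[of "bvec j _"])

lemma bvec_expansion [simp]: "(\<Sum>a\<in>(UNIV::'b::finite set). u a * bvec a k) = (u k :: 'k::field)"
  by (simp add: bvec_sym[of _ k])

lemma mulv_lincomb_left:
  "finite A \<Longrightarrow> mulv mu (\<lambda>k. \<Sum>b\<in>A. c b * f b k) v t = (\<Sum>b\<in>A. c b * mulv mu (f b) v t)"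
  by (induction A rule: finite_induct) (simp_all add: mulv_def algebra_simps sum.distrib sum_distrib_left)

lemma mulv_lincomb_right:
  "finite A \<Longrightarrow> mulv mu u (\<lambda>k. \<Sum>b\<in>A. c b * f b k) t = (\<Sum>b\<in>A. c b * mulv mu u (f b) t)"
  by (induction A rule: finite_induct) (simp_all add: mulv_def algebra_simps sum.distrib sum_distrib_left)

lemma mulv_expand_left: "mulv mu u v t = (\<Sum>a\<in>UNIV. u a * mulv mu (bvec a) v t)"
  using mulv_lincomb_left[of UNIV mu u bvec v t] by (simp add: bvec_expansion)

lemma mulv_expand_right: "mulv mu u v t = (\<Sum>b\<in>UNIV. v b * mulv mu u (bvec b) t)"
  using mulv_lincomb_right[of UNIV mu u v bvec t] by (simp add: bvec_expansion)

lemma mulv_scale_left: "mulv mu (\<lambda>k. c * u k) v t = c * mulv mu u v t"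
  by (simp add: mulv_def sum_distrib_left ac_simps)

lemma mulv_scale_right: "mulv mu u (\<lambda>k. c * v k) t = c * mulv mu u v t"
  by (simp add: mulv_def sum_distrib_left ac_simps)

lemma mulv_expand:
  "mulv mu u v = (\<lambda>k. \<Sum>a\<in>UNIV. u a * (\<Sum>b\<in>UNIV. v b * mulv mu (bvec a) (bvec b) k))"
proof
  fix k
  have "mulv mu (bvec a) v k = (\<Sum>b\<in>UNIV. v b * mulv mu (bvec a) (bvec b) k)" for a
    by (rule mulv_expand_right)
  then show "mulv mu u v k = (\<Sum>a\<in>UNIV. u a * (\<Sum>b\<in>UNIV. v b * mulv mu (bvec a) (bvec b) k))"
    by (simp add: mulv_expand_left[of mu u])
qed

lemma mulv_nested_right:
  "mulv mu p (mulv mu q r) t = (\<Sum>a\<in>UNIV. \<Sum>b\<in>UNIV. \<Sum>c\<in>UNIV.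
     p a * q b * r c * mulv mu (bvec a) (mulv mu (bvec b) (bvec c)) t)"
  unfolding mulv_expand_left[of mu p] mulv_expand[of mu q r]
  by (simp only: mulv_lincomb_right[OF finite_UNIV]) (simp add: sum_distrib_left ac_simps)

lemma mulv_nested_left:
  "mulv mu (mulv mu p q) r t = (\<Sum>a\<in>UNIV. \<Sum>b\<in>UNIV. \<Sum>c\<in>UNIV.
     p a * q b * r c * mulv mu (mulv mu (bvec a) (bvec b)) (bvec c) t)"
proof -
  have "mulv mu (mulv mu p q) r t = (\<Sum>c\<in>UNIV. \<Sum>a\<in>UNIV. \<Sum>b\<in>UNIV.
     p a * q b * r c * mulv mu (mulv mu (bvec a) (bvec b)) (bvec c) t)"
    unfolding mulv_expand_right[of mu _ r] mulv_expand[of mu p q]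
    by (simp only: mulv_lincomb_left[OF finite_UNIV]) (simp add: sum_distrib_left ac_simps)
  also have "\<dots> = (\<Sum>a\<in>UNIV. \<Sum>c\<in>UNIV. \<Sum>b\<in>UNIV.
     p a * q b * r c * mulv mu (mulv mu (bvec a) (bvec b)) (bvec c) t)"
    by (rule sum.swap)
  also have "\<dots> = (\<Sum>a\<in>UNIV. \<Sum>b\<in>UNIV. \<Sum>c\<in>UNIV.
     p a * q b * r c * mulv mu (mulv mu (bvec a) (bvec b)) (bvec c) t)"
    by (rule sum.cong[OF refl], rule sum.swap)
  finally show ?thesis .
qed

text \<open>The pairing \<open>\<langle>U \<otimes> V \<otimes> W, F\<rangle>\<close> of three 2-tensors, with \<open>F\<close> taking the first legs of
  \<open>U, V, W\<close> before the second legs, as in \<open>sw3\<close>.\<close>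

definition tensor_pairing3 ::
  "('b::finite \<times> 'b \<Rightarrow> 'k::field) \<Rightarrow> ('b \<times> 'b \<Rightarrow> 'k) \<Rightarrow> ('b \<times> 'b \<Rightarrow> 'k)
   \<Rightarrow> ('b \<Rightarrow> 'b \<Rightarrow> 'b \<Rightarrow> 'b \<Rightarrow> 'b \<Rightarrow> 'b \<Rightarrow> 'k) \<Rightarrow> 'k" where
  "tensor_pairing3 U V W F = (\<Sum>a1\<in>UNIV. \<Sum>a2\<in>UNIV. \<Sum>b1\<in>UNIV. \<Sum>b2\<in>UNIV. \<Sum>c1\<in>UNIV. \<Sum>c2\<in>UNIV.
      U (a1, a2) * V (b1, b2) * W (c1, c2) * F a1 b1 c1 a2 b2 c2)"

lemma tensor_pairing3_add:
  "tensor_pairing3 (\<lambda>p. U p + U' p) V W F = tensor_pairing3 U V W F + tensor_pairing3 U' V W F"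
  "tensor_pairing3 U (\<lambda>p. V p + V' p) W F = tensor_pairing3 U V W F + tensor_pairing3 U V' W F"
  "tensor_pairing3 U V (\<lambda>p. W p + W' p) F = tensor_pairing3 U V W F + tensor_pairing3 U V W' F"
  by (simp_all add: tensor_pairing3_def algebra_simps sum.distrib)

lemma tensor_pairing3_lincomb:
  assumes "finite A"
  shows "tensor_pairing3 (\<lambda>p. \<Sum>a\<in>A. c a * f a p) V W F = (\<Sum>a\<in>A. c a * tensor_pairing3 (f a) V W F)"
    and "tensor_pairing3 U (\<lambda>p. \<Sum>a\<in>A. c a * f a p) W F = (\<Sum>a\<in>A. c a * tensor_pairing3 U (f a) W F)"
    and "tensor_pairing3 U V (\<lambda>p. \<Sum>a\<in>A. c a * f a p) F = (\<Sum>a\<in>A. c a * tensor_pairing3 U V (f a) F)"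
  using assms
  by (induction A rule: finite_induct)
     (simp_all add: tensor_pairing3_def algebra_simps sum.distrib sum_distrib_left)

lemma comul_bvec: "comul co (bvec a) (j, k) = co a j k"
  by (simp add: comul_def)

lemma comul_expansion: "comul co u = (\<lambda>p. \<Sum>a\<in>UNIV. u a * comul co (bvec a) p)"
  by (auto simp: comul_def sum_distrib_left ac_simps)

lemma tensor_pairing3_comul:
  "tensor_pairing3 (comul co u) (comul co v) (comul co w) F =
     (\<Sum>a\<in>UNIV. \<Sum>b\<in>UNIV. \<Sum>c\<in>UNIV. u a * v b * w c * sw3 co a b c F)"
proof -
  have "tensor_pairing3 (comul co (bvec a)) (comul co (bvec b)) (comul co (bvec c)) F = sw3 co a b c F"
    for a b c
    by (simp add: tensor_pairing3_def sw3_def comul_bvec)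
  then show ?thesis
    by (subst (1 2 3) comul_expansion)
       (simp add: tensor_pairing3_lincomb sum_distrib_left mult.assoc)
qed

lemma tensor_pairing3_tens:
  "tensor_pairing3 (tens p1 q1) (tens p2 q2) (tens p3 q3) (\<lambda>a1 b1 c1 a2 b2 c2. G a1 b1 c1 * H a2 b2 c2) =
     (\<Sum>a1\<in>UNIV. \<Sum>b1\<in>UNIV. \<Sum>c1\<in>UNIV. p1 a1 * p2 b1 * p3 c1 * G a1 b1 c1) *
     (\<Sum>a2\<in>UNIV. \<Sum>b2\<in>UNIV. \<Sum>c2\<in>UNIV. q1 a2 * q2 b2 * q3 c2 * H a2 b2 c2)"
  (is "_ = (\<Sum>a1\<in>UNIV. \<Sum>b1\<in>UNIV. \<Sum>c1\<in>UNIV. ?g a1 b1 c1) * (\<Sum>a2\<in>UNIV. \<Sum>b2\<in>UNIV. \<Sum>c2\<in>UNIV. ?h a2 b2 c2)")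
proof -
  have "tensor_pairing3 (tens p1 q1) (tens p2 q2) (tens p3 q3) (\<lambda>a1 b1 c1 a2 b2 c2. G a1 b1 c1 * H a2 b2 c2) =
     (\<Sum>a1\<in>UNIV. \<Sum>a2\<in>UNIV. \<Sum>b1\<in>UNIV. \<Sum>b2\<in>UNIV. \<Sum>c1\<in>UNIV. \<Sum>c2\<in>UNIV. ?g a1 b1 c1 * ?h a2 b2 c2)"
    by (simp add: tensor_pairing3_def tens_def ac_simps)
  also have "\<dots> = (\<Sum>a1\<in>UNIV. \<Sum>b1\<in>UNIV. \<Sum>a2\<in>UNIV. \<Sum>b2\<in>UNIV. \<Sum>c1\<in>UNIV. \<Sum>c2\<in>UNIV. ?g a1 b1 c1 * ?h a2 b2 c2)"
    by (rule sum.cong[OF refl], rule sum.swap)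
  also have "\<dots> = (\<Sum>a1\<in>UNIV. \<Sum>b1\<in>UNIV. \<Sum>a2\<in>UNIV. \<Sum>c1\<in>UNIV. \<Sum>b2\<in>UNIV. \<Sum>c2\<in>UNIV. ?g a1 b1 c1 * ?h a2 b2 c2)"
    by (rule sum.cong[OF refl], rule sum.cong[OF refl], rule sum.cong[OF refl], rule sum.swap)
  also have "\<dots> = (\<Sum>a1\<in>UNIV. \<Sum>b1\<in>UNIV. \<Sum>c1\<in>UNIV. \<Sum>a2\<in>UNIV. \<Sum>b2\<in>UNIV. \<Sum>c2\<in>UNIV. ?g a1 b1 c1 * ?h a2 b2 c2)"
    by (rule sum.cong[OF refl], rule sum.cong[OF refl], rule sum.swap)
  also have "\<dots> = (\<Sum>a1\<in>UNIV. \<Sum>b1\<in>UNIV. \<Sum>c1\<in>UNIV. ?g a1 b1 c1) *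
      (\<Sum>a2\<in>UNIV. \<Sum>b2\<in>UNIV. \<Sum>c2\<in>UNIV. ?h a2 b2 c2)"
    by (simp only: sum_distrib_right, simp only: sum_distrib_left)
  finally show ?thesis .
qed

definition qassoc_lhs :: "('b::finite \<Rightarrow> 'b \<Rightarrow> 'b \<Rightarrow> 'k::field) \<Rightarrow> ('b \<Rightarrow> 'b \<Rightarrow> 'b \<Rightarrow> 'k) \<Rightarrow> 'b
    \<Rightarrow> 'b \<Rightarrow> 'b \<Rightarrow> 'b \<Rightarrow> 'b \<Rightarrow> 'b \<Rightarrow> 'b \<Rightarrow> 'k" where
  "qassoc_lhs mu phi t =
     (\<lambda>a1 b1 c1 a2 b2 c2. mulv mu (bvec a1) (mulv mu (bvec b1) (bvec c1)) t * phi a2 b2 c2)"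

definition qassoc_rhs :: "('b::finite \<Rightarrow> 'b \<Rightarrow> 'b \<Rightarrow> 'k::field) \<Rightarrow> ('b \<Rightarrow> 'b \<Rightarrow> 'b \<Rightarrow> 'k) \<Rightarrow> 'b
    \<Rightarrow> 'b \<Rightarrow> 'b \<Rightarrow> 'b \<Rightarrow> 'b \<Rightarrow> 'b \<Rightarrow> 'b \<Rightarrow> 'k" where
  "qassoc_rhs mu phi t =
     (\<lambda>a1 b1 c1 a2 b2 c2. phi a1 b1 c1 * mulv mu (mulv mu (bvec a2) (bvec b2)) (bvec c2) t)"

lemma tensor_pairing3_qassoc_lhs:
  "tensor_pairing3 (tens p1 q1) (tens p2 q2) (tens p3 q3) (qassoc_lhs mu phi t) =
     mulv mu p1 (mulv mu p2 p3) t * trif phi q1 q2 q3"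
  unfolding qassoc_lhs_def tensor_pairing3_tens mulv_nested_right[of mu p1] trif_def ..

lemma tensor_pairing3_qassoc_rhs:
  "tensor_pairing3 (tens p1 q1) (tens p2 q2) (tens p3 q3) (qassoc_rhs mu phi t) =
     trif phi p1 p2 p3 * mulv mu (mulv mu q1 q2) q3 t"
  unfolding qassoc_rhs_def tensor_pairing3_tens mulv_nested_left[of mu q1] trif_def ..

lemma quasi_assoc:
  assumes "majid_algebra mu one co eps phi s alpha beta"
  shows "tensor_pairing3 (comul co u) (comul co v) (comul co w) (qassoc_lhs mu phi t) =
         tensor_pairing3 (comul co u) (comul co v) (comul co w) (qassoc_rhs mu phi t)"
proof -
  have "\<forall>a b c t. sw3 co a b c (qassoc_lhs mu phi t) = sw3 co a b c (qassoc_rhs mu phi t)"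
    using assms unfolding majid_algebra_def qassoc_lhs_def qassoc_rhs_def by (elim conjE) assumption
  then show ?thesis
    by (simp add: tensor_pairing3_comul)
qed

definition skew_primitive ::
  "('b::finite \<Rightarrow> 'b \<Rightarrow> 'b \<Rightarrow> 'k::field) \<Rightarrow> ('b \<Rightarrow> 'k) \<Rightarrow> ('b \<Rightarrow> 'k) \<Rightarrow> ('b \<Rightarrow> 'k) \<Rightarrow> bool" where
  "skew_primitive co one g X \<longleftrightarrow> comul co X = (\<lambda>p. tens X one p + tens g X p)"

lemma mulv_one_left:
  assumes "majid_algebra mu one co eps phi s alpha beta"
  shows "mulv mu one v = v"
proof
  fix t
  have "mulv mu one (bvec b) = bvec b" for b
    using assms by (simp add: majid_algebra_def)
  then show "mulv mu one v t = v t"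
    by (simp add: mulv_expand_right[of mu one])
qed

lemma mulv_one_right:
  assumes "majid_algebra mu one co eps phi s alpha beta"
  shows "mulv mu v one = v"
proof
  fix t
  have "mulv mu (bvec a) one = bvec a" for a
    using assms by (simp add: majid_algebra_def)
  then show "mulv mu v one t = v t"
    by (simp add: mulv_expand_left[of mu v])
qed

lemma homog_support:
  assumes "X \<in> homog deg n" "X p \<noteq> 0"
  shows "deg p = n"
proof -
  obtain F c where F: "finite F" "F \<subseteq> {bvec b | b. deg b = n}" "X = (\<lambda>x. \<Sum>u\<in>F. c u * u x)"
    using assms(1) unfolding homog_def lspan_def by blast
  have "u p = 0" if "u \<in> F" "deg p \<noteq> n" for u
    using that F(2) by (auto simp: bvec_def)
  then show ?thesis
    using assms(2) F(3) by (metis (mono_tags, lifting) mult_zero_right sum.neutral)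
qed

lemma trif_homog_pos_deg:
  assumes "graded_majid deg mu one co eps phi s alpha beta" "X \<in> homog deg n" "0 < n"
  shows "trif phi X v w = 0" "trif phi u X w = 0" "trif phi u v X = 0"
proof -
  have "X p = 0 \<and> X q = 0 \<and> X r = 0" if "phi p q r \<noteq> 0" for p q r
    using that assms homog_support[OF assms(2)] unfolding graded_majid_def by (metis neq0_conv)
  then show "trif phi X v w = 0" "trif phi u X w = 0" "trif phi u v X = 0"
    unfolding trif_def by (auto intro!: sum.neutral)
qed

lemma quasi_assoc_skew_grouplikes:
  assumes maj: "majid_algebra mu one co eps phi s alpha beta"
    and graded: "graded_majid deg mu one co eps phi s alpha beta"
    and X: "X \<in> homog deg n" "0 < n" "skew_primitive co one g X"
    and k: "k \<in> grouplikes co" and l: "l \<in> grouplikes co"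
  shows "mulv mu X (mulv mu k l) t * trif phi one k l = trif phi g k l * mulv mu (mulv mu X k) l t"
    and "mulv mu k (mulv mu X l) t * trif phi k one l = trif phi k g l * mulv mu (mulv mu k X) l t"
    and "mulv mu k (mulv mu l X) t * trif phi k l one = trif phi k l g * mulv mu (mulv mu k l) X t"
proof -
  have \<Delta>: "comul co X = (\<lambda>p. tens X one p + tens g X p)" "comul co k = tens k k" "comul co l = tens l l"
    using X(3) k l by (simp_all add: skew_primitive_def grouplikes_def)
  note expand = \<Delta> tensor_pairing3_add tensor_pairing3_qassoc_lhs tensor_pairing3_qassoc_rhs
    trif_homog_pos_deg[OF graded X(1,2)]
  show "mulv mu X (mulv mu k l) t * trif phi one k l = trif phi g k l * mulv mu (mulv mu X k) l t"
    using quasi_assoc[OF maj, of X k l t] unfolding expand by simp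
  show "mulv mu k (mulv mu X l) t * trif phi k one l = trif phi k g l * mulv mu (mulv mu k X) l t"
    using quasi_assoc[OF maj, of k X l t] unfolding expand by simp
  show "mulv mu k (mulv mu l X) t * trif phi k l one = trif phi k l g * mulv mu (mulv mu k l) X t"
    using quasi_assoc[OF maj, of k l X t] unfolding expand by simp
qed

definition tensor_mulv ::
  "('b::finite \<Rightarrow> 'b \<Rightarrow> 'b \<Rightarrow> 'k::field) \<Rightarrow> ('b \<times> 'b \<Rightarrow> 'k) \<Rightarrow> ('b \<times> 'b \<Rightarrow> 'k) \<Rightarrow> ('b \<times> 'b \<Rightarrow> 'k)" where
  "tensor_mulv mu U V = (\<lambda>(j, k). \<Sum>a1\<in>UNIV. \<Sum>a2\<in>UNIV. \<Sum>b1\<in>UNIV. \<Sum>b2\<in>UNIV.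
      U (a1, a2) * V (b1, b2) * mu a1 b1 j * mu a2 b2 k)"

lemma tensor_mulv_add:
  "tensor_mulv mu (\<lambda>p. U p + U' p) V p = tensor_mulv mu U V p + tensor_mulv mu U' V p"
  "tensor_mulv mu U (\<lambda>p. V p + V' p) p = tensor_mulv mu U V p + tensor_mulv mu U V' p"
  by (simp_all add: tensor_mulv_def algebra_simps sum.distrib split: prod.split)

lemma tensor_mulv_scale:
  "tensor_mulv mu (\<lambda>p. c * U p) V p = c * tensor_mulv mu U V p"
  "tensor_mulv mu U (\<lambda>p. c * V p) p = c * tensor_mulv mu U V p"
  by (simp_all add: tensor_mulv_def sum_distrib_left ac_simps split: prod.split)

lemma tensor_mulv_lincomb:
  assumes "finite A"
  shows "tensor_mulv mu (\<lambda>p. \<Sum>a\<in>A. c a * f a p) V p = (\<Sum>a\<in>A. c a * tensor_mulv mu (f a) V p)"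
    and "tensor_mulv mu U (\<lambda>p. \<Sum>a\<in>A. c a * f a p) p = (\<Sum>a\<in>A. c a * tensor_mulv mu U (f a) p)"
  using assms
  by (induction A rule: finite_induct)
     (simp_all add: tensor_mulv_add tensor_mulv_scale, simp_all add: tensor_mulv_def split: prod.split)

lemma tensor_mulv_tens: "tensor_mulv mu (tens p q) (tens r s) = tens (mulv mu p r) (mulv mu q s)"
proof (rule ext, clarify)
  fix j k
  have "tensor_mulv mu (tens p q) (tens r s) (j, k) = (\<Sum>a1\<in>UNIV. \<Sum>a2\<in>UNIV. \<Sum>b1\<in>UNIV. \<Sum>b2\<in>UNIV.
      (p a1 * r b1 * mu a1 b1 j) * (q a2 * s b2 * mu a2 b2 k))"
    by (simp add: tensor_mulv_def tens_def ac_simps)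
  also have "\<dots> = (\<Sum>a1\<in>UNIV. \<Sum>b1\<in>UNIV. \<Sum>a2\<in>UNIV. \<Sum>b2\<in>UNIV.
      (p a1 * r b1 * mu a1 b1 j) * (q a2 * s b2 * mu a2 b2 k))"
    by (rule sum.cong[OF refl], rule sum.swap)
  also have "\<dots> = tens (mulv mu p r) (mulv mu q s) (j, k)"
    unfolding tens_def mulv_def by (simp only: prod.case sum_distrib_right, simp only: sum_distrib_left)
  finally show "tensor_mulv mu (tens p q) (tens r s) (j, k) = tens (mulv mu p r) (mulv mu q s) (j, k)" .
qed

lemma comul_mulv:
  assumes "majid_algebra mu one co eps phi s alpha beta"
  shows "comul co (mulv mu u v) = tensor_mulv mu (comul co u) (comul co v)"
proof (rule ext, clarify)
  fix j k
  have ax: "(\<Sum>l\<in>UNIV. mu a b l * co l j k) = tensor_mulv mu (comul co (bvec a)) (comul co (bvec b)) (j, k)"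
    for a b
    using assms by (simp add: majid_algebra_def tensor_mulv_def comul_bvec)
  have "comul co (mulv mu u v) (j, k) = (\<Sum>l\<in>UNIV. \<Sum>a\<in>UNIV. \<Sum>b\<in>UNIV. u a * v b * (mu a b l * co l j k))"
    by (simp add: comul_def mulv_def sum_distrib_left sum_distrib_right ac_simps)
  also have "\<dots> = (\<Sum>a\<in>UNIV. \<Sum>b\<in>UNIV. \<Sum>l\<in>UNIV. u a * v b * (mu a b l * co l j k))"
    by (subst sum.swap, rule sum.cong[OF refl], rule sum.swap)
  also have "\<dots> = (\<Sum>a\<in>UNIV. u a * (\<Sum>b\<in>UNIV. v b * tensor_mulv mu (comul co (bvec a)) (comul co (bvec b)) (j, k)))"
    by (simp add: ax[symmetric] sum_distrib_left mult.assoc)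
  also have "\<dots> = tensor_mulv mu (comul co u) (comul co v) (j, k)"
    by (subst (1 2) comul_expansion) (simp add: tensor_mulv_lincomb)
  finally show "comul co (mulv mu u v) (j, k) = tensor_mulv mu (comul co u) (comul co v) (j, k)" .
qed

lemma comul_scale: "comul co (\<lambda>t. c * f t) = (\<lambda>p. c * comul co f p)"
  by (auto simp: comul_def sum_distrib_left ac_simps)

lemma skew_primitive_not_proportional:
  assumes "skew_primitive co one g X" "skew_primitive co one h Y"
    and "X \<noteq> (\<lambda>_. 0)" "Y \<noteq> (\<lambda>_. 0)" "g \<noteq> h"
  shows "Y \<noteq> (\<lambda>t. c * X t)"
proof
  assume Y: "Y = (\<lambda>t. c * X t)"
  obtain t where "X t \<noteq> 0" using assms(3) by auto
  moreover have "c \<noteq> 0" using Y assms(4) by auto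
  moreover have "comul co Y (p, t) = c * comul co X (p, t)" for p
    using Y by (simp add: comul_scale)
  then have "c * X t * h p = c * X t * g p" for p
    using assms(1,2) Y by (simp add: skew_primitive_def tens_def algebra_simps)
  ultimately have "h = g" by auto
  with assms(5) show False by simp
qed

lemma tensor_relation_trivial:
  fixes X Y :: "'b \<Rightarrow> 'k::field"
  assumes rel: "\<And>p1 p2. A p1 * Y p2 + B p1 * X p2 = 0"
    and indep: "\<And>c. Y \<noteq> (\<lambda>t. c * X t)" and X: "X \<noteq> (\<lambda>_. 0)"
  shows "A = (\<lambda>_. 0)" and "B = (\<lambda>_. 0)"
proof -
  show A: "A = (\<lambda>_. 0)"
  proof (rule ccontr)
    assume "A \<noteq> (\<lambda>_. 0)"
    then obtain p where "A p \<noteq> 0" by auto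
    then have "Y = (\<lambda>t. (- B p / A p) * X t)"
      using rel[of p] by (auto simp: field_simps eq_neg_iff_add_eq_0)
    with indep show False by blast
  qed
  obtain t where "X t \<noteq> 0" using X by auto
  with rel A show "B = (\<lambda>_. 0)" by fastforce
qed

lemma comul_mulv_skew_primitives:
  assumes maj: "majid_algebra mu one co eps phi s alpha beta"
    and "skew_primitive co one g X" "skew_primitive co one h Y"
  shows "comul co (mulv mu X Y) (p1, p2) = mulv mu X Y p1 * one p2 + mulv mu X h p1 * Y p2
           + mulv mu g Y p1 * X p2 + mulv mu g h p1 * mulv mu X Y p2"
proof -
  have \<Delta>: "comul co X = (\<lambda>p. tens X one p + tens g X p)" "comul co Y = (\<lambda>p. tens Y one p + tens h Y p)"
    using assms(2,3) by (simp_all add: skew_primitive_def)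
  show ?thesis
    unfolding comul_mulv[OF maj] \<Delta> tensor_mulv_add tensor_mulv_tens
    by (simp add: tens_def mulv_one_left[OF maj] mulv_one_right[OF maj])
qed

lemma skew_commutation_grouplikes:
  assumes maj: "majid_algebra mu one co eps phi s alpha beta"
    and X: "skew_primitive co one g X" "X \<noteq> (\<lambda>_. 0)"
    and Y: "skew_primitive co one h Y" "Y \<noteq> (\<lambda>_. 0)"
    and "g \<noteq> h" and gh: "mulv mu g h = mulv mu h g"
    and XY: "mulv mu X Y = (\<lambda>t. q * mulv mu Y X t)"
  shows "mulv mu X h = (\<lambda>t. q * mulv mu h X t)" and "mulv mu g Y = (\<lambda>t. q * mulv mu Y g t)"
proof -
  define A where "A = (\<lambda>t. mulv mu X h t - q * mulv mu h X t)"
  define B where "B = (\<lambda>t. mulv mu g Y t - q * mulv mu Y g t)"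
  have "A p1 * Y p2 + B p1 * X p2 = 0" for p1 p2
  proof -
    have "comul co (mulv mu X Y) (p1, p2) = q * comul co (mulv mu Y X) (p1, p2)"
      by (simp add: XY comul_scale)
    then show ?thesis
      unfolding comul_mulv_skew_primitives[OF maj X(1) Y(1)] comul_mulv_skew_primitives[OF maj Y(1) X(1)]
      by (simp add: A_def B_def XY gh algebra_simps)
  qed
  moreover note skew_primitive_not_proportional[OF X(1) Y(1) X(2) Y(2) \<open>g \<noteq> h\<close>]
  ultimately have "A = (\<lambda>_. 0)" "B = (\<lambda>_. 0)"
    using tensor_relation_trivial[of A Y B X] X(2) by blast+
  then   show "mulv mu X h = (\<lambda>t. q * mulv mu h X t)" and "mulv mu g Y = (\<lambda>t. q * mulv mu Y g t)"
    by (auto simp: A_def B_def fun_eq_iff)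
qed

text \<open>Stated for a relation \<open>a Xh = b hX\<close> so that it applies both to \<open>Xh = q hX\<close> and,
  with the roles of the skew-primitives exchanged, to \<open>q Yg = gY\<close>.\<close>

lemma associator_twisted_commutation:
  assumes maj: "majid_algebra mu one co eps phi s alpha beta"
    and graded: "graded_majid deg mu one co eps phi s alpha beta"
    and X: "X \<in> homog deg n" "0 < n" "skew_primitive co one g X" "X \<noteq> (\<lambda>_. 0)"
    and h: "h \<in> grouplikes co" "mulv mu h h = one"
    and norm: "trif phi one h h = 1" "trif phi h one h = 1" "trif phi h h one = 1"
    and twist: "(\<lambda>t. a * mulv mu X h t) = (\<lambda>t. b * mulv mu h X t)"
  shows "b\<^sup>2 * trif phi h h g * trif phi g h h = a\<^sup>2 * trif phi h g h"
proof -
  obtain t where t: "X t \<noteq> 0" using X(4) by auto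
  note qa = quasi_assoc_skew_grouplikes[OF maj graded X(1-3) h(1) h(1), where t = t]
  have X_hh: "X t = trif phi g h h * mulv mu (mulv mu X h) h t"
    using qa(1) norm by (simp add: h(2) mulv_one_right[OF maj])
  have h_Xh: "mulv mu h (mulv mu X h) t = trif phi h g h * mulv mu (mulv mu h X) h t"
    using qa(2) norm by simp
  have hh_X: "mulv mu h (mulv mu h X) t = trif phi h h g * X t"
    using qa(3) norm by (simp add: h(2) mulv_one_left[OF maj])
  have twist_left: "a * mulv mu h (mulv mu X h) t = b * mulv mu h (mulv mu h X) t"
    using arg_cong[OF twist, of "\<lambda>v. mulv mu h v t"] by (simp add: mulv_scale_right)
  have twist_right: "a * mulv mu (mulv mu X h) h t = b * mulv mu (mulv mu h X) h t"
    using arg_cong[OF twist, of "\<lambda>v. mulv mu v h t"] by (simp add: mulv_scale_left)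
  have "b\<^sup>2 * trif phi h h g * trif phi g h h * X t
      = a * trif phi h g h * (b * mulv mu (mulv mu h X) h t) * trif phi g h h"
    using twist_left h_Xh hh_X by (simp add: power2_eq_square ac_simps)
  also have "\<dots> = a\<^sup>2 * trif phi h g h * X t"
    using twist_right X_hh by (simp add: power2_eq_square ac_simps)
  finally show ?thesis
    using t by simp
qed

lemma associator_identity_skew_pair:
  assumes maj: "majid_algebra mu one co eps phi s alpha beta"
    and graded: "graded_majid deg mu one co eps phi s alpha beta"
    and X: "X \<in> homog deg m" "0 < m" "skew_primitive co one g X" "X \<noteq> (\<lambda>_. 0)"
    and Y: "Y \<in> homog deg n" "0 < n" "skew_primitive co one h Y" "Y \<noteq> (\<lambda>_. 0)"
    and g: "g \<in> grouplikes co" "mulv mu g g = one"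
    and h: "h \<in> grouplikes co" "mulv mu h h = one"
    and "g \<noteq> h" and gh: "mulv mu g h = mulv mu h g"
    and XY: "mulv mu X Y = (\<lambda>t. q * mulv mu Y X t)"
    and norm_g: "trif phi one g g = 1" "trif phi g one g = 1" "trif phi g g one = 1"
    and norm_h: "trif phi one h h = 1" "trif phi h one h = 1" "trif phi h h one = 1"
  shows "trif phi h g g * trif phi g g h * trif phi h h g * trif phi g h h = trif phi g h g * trif phi h g h"
proof -
  note commute = skew_commutation_grouplikes[OF maj X(3,4) Y(3,4) \<open>g \<noteq> h\<close> gh XY]
  have h_side: "q\<^sup>2 * trif phi h h g * trif phi g h h = trif phi h g h"
    using associator_twisted_commutation[OF maj graded X h norm_h, of 1 q] commute(1) by simp
  have g_side: "trif phi h g g * trif phi g g h = q\<^sup>2 * trif phi g h g"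
    using associator_twisted_commutation[OF maj graded Y g norm_g, of q 1] commute(2)
    by (simp add: mult.commute)
  have "trif phi h g g * trif phi g g h * trif phi h h g * trif phi g h h
      = trif phi g h g * (q\<^sup>2 * trif phi h h g * trif phi g h h)"
    unfolding g_side by (simp only: ac_simps)
  then show ?thesis
    unfolding h_side .
qed

lemma phi_formula_expand:
  "phi_formula a aa (i1, i2, i3) (j1, j2, j3) (k1, k2, k3) =
     (-1) ^ (a 1 * i1 * ((j1 + k1) div 2)) * (-1) ^ (a 2 * i2 * ((j2 + k2) div 2)) *
     (-1) ^ (a 3 * i3 * ((j3 + k3) div 2)) *
     ((-1) ^ (aa 1 2 * i2 * ((j1 + k1) div 2)) * (-1) ^ (aa 1 3 * i3 * ((j1 + k1) div 2)) *
      (-1) ^ (aa 2 3 * i3 * ((j2 + k2) div 2)) :: 'k::field)"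
proof -
  have "{1..3::nat} = {1, 2, 3}" "{(s, t). 1 \<le> s \<and> s < t \<and> t \<le> (3::nat)} = {(1, 2), (1, 3), (2, 3)}"
    by auto
  then show ?thesis
    by (simp add: phi_formula_def comp_def)
qed

lemma phi_formula_diag_expand:
  "phi_formula_diag a (i1, i2, i3) (j1, j2, j3) (k1, k2, k3) =
     ((-1) ^ (a 1 * i1 * ((j1 + k1) div 2)) * (-1) ^ (a 2 * i2 * ((j2 + k2) div 2)) *
      (-1) ^ (a 3 * i3 * ((j3 + k3) div 2)) :: 'k::field)"
proof -
  have "{1..3::nat} = {1, 2, 3}"
    by auto
  then show ?thesis
    by (simp add: phi_formula_diag_def comp_def)
qed

lemma phi_formula_eq_diag:
  assumes "aa 1 2 = 0" "aa 1 3 = 0" "aa 2 3 = 0"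
  shows "phi_formula a aa i j k = (phi_formula_diag a i j k :: 'k::field)"
  using assms by (cases i, cases j, cases k) (simp add: phi_formula_expand phi_formula_diag_expand)

lemma mono_generators:
  assumes "majid_algebra mu one co eps phi s alpha beta"
  shows "mono mu one x (0, 0, 0) = one" "mono mu one x (1, 0, 0) = x 1"
    and "mono mu one x (0, 1, 0) = x 2" "mono mu one x (0, 0, 1) = x 3"
  by (simp_all add: mono_def pw_def mulv_one_left[OF assms] mulv_one_right[OF assms])

lemma associator_generators:
  fixes phi :: "'b::finite \<Rightarrow> 'b \<Rightarrow> 'b \<Rightarrow> 'k::field"
  assumes maj: "majid_algebra mu one co eps phi s alpha beta"
    and Phi: "\<forall>i\<in>cube. \<forall>j\<in>cube. \<forall>k\<in>cube.
      trif phi (mono mu one x i) (mono mu one x j) (mono mu one x k) = phi_formula a aa i j k"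
  shows "l \<in> {1, 2, 3} \<Longrightarrow> trif phi one (x l) (x l) = 1"
    and "l \<in> {1, 2, 3} \<Longrightarrow> trif phi (x l) one (x l) = 1"
    and "l \<in> {1, 2, 3} \<Longrightarrow> trif phi (x l) (x l) one = 1"
    and "(i, j) \<in> {(1, 2), (1, 3), (2, 3)} \<Longrightarrow>
      trif phi (x j) (x i) (x i) * trif phi (x i) (x i) (x j) * trif phi (x j) (x j) (x i) *
      trif phi (x i) (x j) (x j) = trif phi (x i) (x j) (x i) * trif phi (x j) (x i) (x j)
      \<longleftrightarrow> (-1::'k) ^ aa i j = 1"
proof -
  let ?m = "mono mu one x"
  have zero: "(0, 0, 0) \<in> cube"
    by (simp add: cube_def)
  have Phi_cube: "trif phi (?m i) (?m j) (?m k) = phi_formula a aa i j k"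
    if "i \<in> cube" "j \<in> cube" "k \<in> cube" for i j k
    using Phi that by blast
  have Phi_one:
    "\<And>j k. j \<in> cube \<Longrightarrow> k \<in> cube \<Longrightarrow> trif phi one (?m j) (?m k) = phi_formula a aa (0, 0, 0) j k"
    "\<And>i k. i \<in> cube \<Longrightarrow> k \<in> cube \<Longrightarrow> trif phi (?m i) one (?m k) = phi_formula a aa i (0, 0, 0) k"
    "\<And>i j. i \<in> cube \<Longrightarrow> j \<in> cube \<Longrightarrow> trif phi (?m i) (?m j) one = phi_formula a aa i j (0, 0, 0)"
    using Phi_cube[OF zero] Phi_cube[OF _ zero] Phi_cube[OF _ _ zero]
    by (simp_all add: mono_generators(1)[OF maj])
  \<comment> \<open>\<open>simplified\<close> turns \<open>x 1\<close> into \<open>x (Suc 0)\<close>, the simp normal form of the goals below\<close>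
  note x_mono = mono_generators(2-4)[OF maj, symmetric, simplified]
  note eval = x_mono Phi_cube Phi_one cube_def phi_formula_expand
  show "trif phi one (x l) (x l) = 1" "trif phi (x l) one (x l) = 1" "trif phi (x l) (x l) one = 1"
    if "l \<in> {1, 2, 3}"
    using that by (elim insertE; simp add: eval)+
  show "trif phi (x j) (x i) (x i) * trif phi (x i) (x i) (x j) * trif phi (x j) (x j) (x i) *
      trif phi (x i) (x j) (x j) = trif phi (x i) (x j) (x i) * trif phi (x j) (x i) (x j)
      \<longleftrightarrow> (-1::'k) ^ aa i j = 1"
    if "(i, j) \<in> {(1, 2), (1, 3), (2, 3)}"
    using that by (elim insertE; simp add: eval)+
qed

lemma generators_associator_identity:
  assumes maj: "majid_algebra mu one co eps phi s alpha beta"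
    and graded: "graded_majid deg mu one co eps phi s alpha beta"
    and "3 \<le> N"
    and skew: "\<forall>i\<in>{1..N}. x i \<in> grouplikes co \<and> X i \<in> homog deg 1 \<and> X i \<noteq> (\<lambda>_. 0) \<and>
      comul co (X i) = (\<lambda>p. tens (X i) one p + tens (x i) (X i) p)"
    and XX: "\<forall>i\<in>{1..N}. \<forall>j\<in>{1..N}. i \<noteq> j \<longrightarrow>
      mulv mu (X i) (X j) = (\<lambda>t. q j i * mulv mu (X j) (X i) t)"
    and inj: "inj_on (mono mu one x) cube"
    and xx: "\<forall>l\<in>{1..3}. mulv mu (x l) (x l) = one"
    and xx_commute: "\<forall>l\<in>{1..3}. \<forall>m\<in>{1..3}. mulv mu (x l) (x m) = mulv mu (x m) (x l)"
    and Phi: "\<forall>i\<in>cube. \<forall>j\<in>cube. \<forall>k\<in>cube.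
      trif phi (mono mu one x i) (mono mu one x j) (mono mu one x k) = phi_formula a aa i j k"
    and i: "i \<in> {1, 2, 3}" and j: "j \<in> {1, 2, 3}" and "i \<noteq> j"
  shows "trif phi (x j) (x i) (x i) * trif phi (x i) (x i) (x j) * trif phi (x j) (x j) (x i) *
      trif phi (x i) (x j) (x j) = trif phi (x i) (x j) (x i) * trif phi (x j) (x i) (x j)"
proof -
  have range: "i \<in> {1..3}" "j \<in> {1..3}" "i \<in> {1..N}" "j \<in> {1..N}"
    using i j \<open>3 \<le> N\<close> by auto
  have gen: "X l \<in> homog deg 1" "skew_primitive co one (x l) (X l)" "X l \<noteq> (\<lambda>_. 0)"
      "x l \<in> grouplikes co" "mulv mu (x l) (x l) = one"
    if "l \<in> {1..3}" "l \<in> {1..N}" for l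
    using that skew xx by (auto simp: skew_primitive_def)
  have distinct: "x i \<noteq> x j"
    using i j \<open>i \<noteq> j\<close>
    by (auto simp: mono_generators(2-4)[OF maj, symmetric, simplified] inj_on_eq_iff[OF inj] cube_def)
  have commute: "mulv mu (x i) (x j) = mulv mu (x j) (x i)"
    using xx_commute range by blast
  have skew_commute: "mulv mu (X i) (X j) = (\<lambda>u. q j i * mulv mu (X j) (X i) u)"
    using XX range \<open>i \<noteq> j\<close> by blast
  show ?thesis
    by (rule associator_identity_skew_pair[OF maj graded
          gen(1)[OF range(1,3)] zero_less_one gen(2,3)[OF range(1,3)]
          gen(1)[OF range(2,4)] zero_less_one gen(2,3)[OF range(2,4)]
          gen(4,5)[OF range(1,3)] gen(4,5)[OF range(2,4)] distinct commute skew_commute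
          associator_generators(1-3)[OF maj Phi i] associator_generators(1-3)[OF maj Phi j]])
qed

theorem proposition5p5:
  fixes mu co phi :: "'b::finite \<Rightarrow> 'b \<Rightarrow> 'b \<Rightarrow> 'k::field_char_0"
    and one eps alpha beta :: "'b \<Rightarrow> 'k"
    and s :: "'b \<Rightarrow> 'b \<Rightarrow> 'k"
    and deg :: "'b \<Rightarrow> nat"
    and N :: nat and x X :: "nat \<Rightarrow> 'b \<Rightarrow> 'k" and q :: "nat \<Rightarrow> nat \<Rightarrow> 'k"
    and a :: "nat \<Rightarrow> nat" and aa :: "nat \<Rightarrow> nat \<Rightarrow> nat"
  assumes "alg_closed_field TYPE('k)"
    and "majid_algebra mu one co eps phi s alpha beta"
    and "pointed co"
    and "graded_majid deg mu one co eps phi s alpha beta"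
    and "3 \<le> N"
    and "\<forall>i\<in>{1..N}. x i \<in> grouplikes co \<and> X i \<in> homog deg 1 \<and> X i \<noteq> (\<lambda>_. 0) \<and>
           comul co (X i) = (\<lambda>p. tens (X i) one p + tens (x i) (X i) p)"
    and "\<forall>i\<in>{1..N}. \<forall>j\<in>{1..N}. i \<noteq> j \<longrightarrow>
           mulv mu (X i) (X j) = (\<lambda>t. q j i * mulv mu (X j) (X i) t)"
    and "generates mu one (grouplikes co \<union> X ` {1..N})"
    and "grouplikes co = mono mu one x ` cube" and "inj_on (mono mu one x) cube"
    and "\<forall>l\<in>{1..3}. mulv mu (x l) (x l) = one"
    and "\<forall>l\<in>{1..3}. \<forall>m\<in>{1..3}. mulv mu (x l) (x m) = mulv mu (x m) (x l)"
    and "\<forall>l\<in>{1..3}. a l \<le> 1"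
    and "\<forall>s'\<in>{1..3}. \<forall>t\<in>{1..3}. s' < t \<longrightarrow> aa s' t \<le> 1"
    and "\<forall>i\<in>cube. \<forall>j\<in>cube. \<forall>k\<in>cube.
           trif phi (mono mu one x i) (mono mu one x j) (mono mu one x k) = phi_formula a aa i j k"
  shows "aa 1 2 = 0 \<and> aa 1 3 = 0 \<and> aa 2 3 = 0 \<and>
         (\<forall>i\<in>cube. \<forall>j\<in>cube. \<forall>k\<in>cube.
           trif phi (mono mu one x i) (mono mu one x j) (mono mu one x k) = phi_formula_diag a i j k)"
proof -
  have sign: "(-1::'k) ^ aa i j = 1" if ij: "(i, j) \<in> {(1, 2), (1, 3), (2, 3)}" for i j
  proof -
    have "i \<in> {1, 2, 3}" "j \<in> {1, 2, 3}" "i \<noteq> j"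
      using ij by auto
    then show ?thesis
      using generators_associator_identity[OF assms(2,4,5,6,7,10,11,12,15)]
        associator_generators(4)[OF assms(2,15) ij] by blast
  qed
  have "(-1::'k) ^ aa 1 2 = 1" "(-1::'k) ^ aa 1 3 = 1" "(-1::'k) ^ aa 2 3 = 1"
    by (simp_all add: sign)
  moreover have "aa 1 2 \<le> 1" "aa 1 3 \<le> 1" "aa 2 3 \<le> 1"
    using assms(14) by auto
  ultimately have cross: "aa 1 2 = 0" "aa 1 3 = 0" "aa 2 3 = 0"
    by (auto simp: minus_one_power_iff le_Suc_eq split: if_splits)
  show ?thesis
    using cross assms(15) by (simp add: phi_formula_eq_diag)
qed

end
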